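(* For any additive submonoid $N \subseteq \mathbb{N}$, both $\mathrm{Sym}(\Omega) \cup S(N)$ and $\mathrm{Sym}(\Omega) \cup S(N) \cup \mathrm{Inj}_{\infty}(\Omega)$ are submonoids of $\mathrm{Inj}(\Omega)$. Conversely, every submonoid $M \subseteq \mathrm{Inj}(\Omega)$ containing $\mathrm{Sym}(\Omega)$ equals either $\mathrm{Sym}(\Omega) \cup S(N)$ or $\mathrm{Sym}(\Omega) \cup S(N) \cup \mathrm{Inj}_{\infty}(\Omega)$, where $N = M_\mathbb{N}$ (a submonoid of $\mathbb{N}$).
   Context: $\Omega$ is a countably infinite set; $\mathrm{Inj}(\Omega)$ is the monoid of all injective maps $\Omega\to\Omega$ under composition (maps written on the right), $\mathrm{Sym}(\Omega)$ the group of permutations. $\mathbb{N}$ denotes the nonnegative integers. $\mathrm{Inj}_\infty(\Omega)=\{f\in\mathrm{Inj}(\Omega): |\Omega\setminus(\Omega)f|=\aleph_0\}$. For $M\subseteq\mathrm{Inj}(\Omega)$, $M_\mathbb{N}=\{|\Omega\setminus(\Omega)f|: f\in M\}\cap\mathbb{N}$. For $N\subseteq\mathbb{N}$, $S(N)=\{f\in\mathrm{Inj}(\Omega): |\Omega\setminus(\Omega)f|\in N\setminus\{0\}\}$. *)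

theory Defs
  imports Main "HOL-Library.Countable"
begin

text \<open>Omega is modelled as a countably infinite type 'a (class countable,
  plus the assumption that UNIV is infinite).\<close>

definition Inj :: "('a \<Rightarrow> 'a) set" where
  "Inj = {f. inj f}"

definition Sym :: "('a \<Rightarrow> 'a) set" where
  "Sym = {f. bij f}"

definition Inj_inf :: "('a \<Rightarrow> 'a) set" where
  "Inj_inf = {f. inj f \<and> infinite (UNIV - range f)}"

definition MN :: "('a \<Rightarrow> 'a) set \<Rightarrow> nat set" where
  "MN M = {n. \<exists>f\<in>M. finite (UNIV - range f) \<and> card (UNIV - range f) = n}"

definition S :: "nat set \<Rightarrow> ('a \<Rightarrow> 'a) set" where
  "S N = {f. inj f \<and> finite (UNIV - range f) \<and> card (UNIV - range f) \<in> N - {0}}"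

definition inj_submonoid :: "('a \<Rightarrow> 'a) set \<Rightarrow> bool" where
  "inj_submonoid M \<longleftrightarrow> M \<subseteq> Inj \<and> id \<in> M \<and> (\<forall>f\<in>M. \<forall>g\<in>M. f \<circ> g \<in> M)"

definition nat_add_submonoid :: "nat set \<Rightarrow> bool" where
  "nat_add_submonoid N \<longleftrightarrow> 0 \<in> N \<and> (\<forall>a\<in>N. \<forall>b\<in>N. a + b \<in> N)"

end

theory Submission
  imports Defs "HOL-Library.Countable_Set"
begin

(* The whole classification is governed by the defect  Omega - (Omega)f  of an
   injection f.  Two facts about it drive the proof:
   (1) defects add under composition: the defect of f o g is the disjoint union
       of the defect of f and the f-image of the defect of g; hence finite
       defect sizes add, and an infinite defect of either factor is inherited;
   (2) Sym(Omega) acts transitively on injections with equinumerous defects: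
       if the defects of f and g are in bijection, then g = s o f for some
       permutation s.
   From (1) the sets Sym u S(N) and Sym u S(N) u Inj_inf are closed under
   composition whenever N is an additive submonoid of the naturals.  For the
   converse, (1) shows that M_N is an additive submonoid, and (2) shows that a
   submonoid M containing Sym contains every injection whose defect has the
   same size as that of some element of M; since any two countably infinite
   sets are in bijection, M contains either no or all of Inj_inf. *)

abbreviation defect :: "('a \<Rightarrow> 'b) \<Rightarrow> 'b set" where
  "defect f \<equiv> UNIV - range f"

lemma defect_comp:
  assumes "inj f"
  shows "defect (f \<circ> g) = defect f \<union> f ` defect g"
  using assms by (auto simp: inj_eq)

lemma finite_defect_comp:
  assumes "inj f"
  shows "finite (defect (f \<circ> g)) \<longleftrightarrow> finite (defect f) \<and> finite (defect g)"
proof -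
  have "finite (f ` defect g) \<longleftrightarrow> finite (defect g)"
    using assms by (simp add: finite_image_iff inj_on_subset)
  then show ?thesis
    unfolding defect_comp[OF assms] by simp
qed

lemma card_defect_comp:
  assumes "inj f" and "finite (defect f)" and "finite (defect g)"
  shows "card (defect (f \<circ> g)) = card (defect f) + card (defect g)"
proof -
  have "card (defect (f \<circ> g)) = card (defect f) + card (f ` defect g)"
    unfolding defect_comp[OF assms(1)] using assms by (subst card_Un_disjoint) auto
  also have "card (f ` defect g) = card (defect g)"
    using assms(1) by (simp add: card_image inj_on_subset)
  finally show ?thesis .
qed

lemma bij_iff_defect:
  "bij f \<longleftrightarrow> inj f \<and> finite (defect f) \<and> card (defect f) = 0"
  by (auto simp: bij_def card_0_eq) blast

lemma defect_transfer:
  assumes "inj f" and "inj g" and "bij_betw h (defect f) (defect g)"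
  shows "\<exists>\<sigma>. bij \<sigma> \<and> g = \<sigma> \<circ> f"
proof -
  define \<sigma> where "\<sigma> y = (if y \<in> range f then g (inv f y) else h y)" for y
  have on_range: "bij_betw \<sigma> (range f) (range g)"
  proof -
    have "bij_betw (g \<circ> inv f) (range f) (range g)"
      by (rule bij_betw_trans[of _ _ UNIV])
        (use assms in \<open>auto simp: bij_betw_def inj_on_def\<close>)
    then show ?thesis
      by (rule bij_betw_cong[THEN iffD1, rotated]) (auto simp: \<sigma>_def)
  qed
  have on_defect: "bij_betw \<sigma> (defect f) (defect g)"
    using assms(3) by (rule bij_betw_cong[THEN iffD1, rotated]) (auto simp: \<sigma>_def)
  have "bij \<sigma>"
    using bij_betw_combine[OF on_range on_defect] by simp
  moreover have "g = \<sigma> \<circ> f"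
    using assms(1) by (auto simp: \<sigma>_def)
  ultimately show ?thesis by blast
qed

lemma bij_betw_countable_infinite:
  fixes A B :: "'a::countable set"
  assumes "infinite A" and "infinite B"
  shows "\<exists>h. bij_betw h A B"
proof -
  have "bij_betw (from_nat_into A) UNIV A" "bij_betw (from_nat_into B) UNIV B"
    using assms by (auto intro: bij_betw_from_nat_into)
  then have "bij_betw (from_nat_into B \<circ> inv_into UNIV (from_nat_into A)) A B"
    by (meson bij_betw_inv_into bij_betw_trans)
  then show ?thesis by blast
qed

lemma mem_Sym_S_iff:
  fixes f :: "'a \<Rightarrow> 'a"
  assumes "0 \<in> N"
  shows "f \<in> Sym \<union> S N \<longleftrightarrow> inj f \<and> finite (defect f) \<and> card (defect f) \<in> N"
  using assms bij_iff_defect[of f] unfolding Sym_def S_def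
  by (cases "card (defect f) = 0") auto

lemma inj_submonoid_Sym_S:
  fixes N :: "nat set"
  assumes N: "nat_add_submonoid N"
  shows "inj_submonoid (Sym \<union> S N :: ('a \<Rightarrow> 'a) set)"
  unfolding inj_submonoid_def
proof (intro conjI ballI)
  show "Sym \<union> S N \<subseteq> Inj"
    by (auto simp: Sym_def S_def Inj_def bij_def)
  show "id \<in> Sym \<union> S N"
    by (simp add: Sym_def)
  have zero: "0 \<in> N" and add: "\<And>a b. a \<in> N \<Longrightarrow> b \<in> N \<Longrightarrow> a + b \<in> N"
    using N by (auto simp: nat_add_submonoid_def)
  fix f g :: "'a \<Rightarrow> 'a" assume "f \<in> Sym \<union> S N" "g \<in> Sym \<union> S N"
  then have f: "inj f" "finite (defect f)" "card (defect f) \<in> N"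
    and g: "inj g" "finite (defect g)" "card (defect g) \<in> N"
    unfolding mem_Sym_S_iff[OF zero] by auto
  have "finite (defect (f \<circ> g))"
    using f g finite_defect_comp by blast
  moreover have "card (defect (f \<circ> g)) \<in> N"
    unfolding card_defect_comp[OF f(1,2) g(2)] using f g add by blast
  ultimately show "f \<circ> g \<in> Sym \<union> S N"
    unfolding mem_Sym_S_iff[OF zero] using f g inj_compose by blast
qed

text \<open>Adjoining Inj_inf keeps closure, since a composite has infinite defect as
  soon as one factor does.\<close>
lemma inj_submonoid_Sym_S_Inj_inf:
  fixes N :: "nat set"
  assumes N: "nat_add_submonoid N"
  shows "inj_submonoid (Sym \<union> S N \<union> Inj_inf :: ('a \<Rightarrow> 'a) set)"
  unfolding inj_submonoid_def
proof (intro conjI ballI)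
  have zero: "0 \<in> N" and add: "\<And>a b. a \<in> N \<Longrightarrow> b \<in> N \<Longrightarrow> a + b \<in> N"
    using N by (auto simp: nat_add_submonoid_def)
  have mem: "h \<in> Sym \<union> S N \<union> Inj_inf \<longleftrightarrow>
      inj h \<and> (finite (defect h) \<longrightarrow> card (defect h) \<in> N)" for h :: "'a \<Rightarrow> 'a"
    unfolding Un_iff[of h "Sym \<union> S N"] mem_Sym_S_iff[OF zero] Inj_inf_def by auto
  show "Sym \<union> S N \<union> Inj_inf \<subseteq> Inj"
    by (auto simp: Sym_def S_def Inj_def Inj_inf_def bij_def)
  show "id \<in> Sym \<union> S N \<union> Inj_inf"
    by (simp add: Sym_def)
  fix f g :: "'a \<Rightarrow> 'a" assume "f \<in> Sym \<union> S N \<union> Inj_inf" "g \<in> Sym \<union> S N \<union> Inj_inf"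
  then have f: "inj f" "finite (defect f) \<Longrightarrow> card (defect f) \<in> N"
    and g: "inj g" "finite (defect g) \<Longrightarrow> card (defect g) \<in> N"
    unfolding mem by auto
  have "card (defect (f \<circ> g)) \<in> N" if "finite (defect (f \<circ> g))"
  proof -
    have fin: "finite (defect f)" "finite (defect g)"
      using that unfolding finite_defect_comp[OF f(1)] by simp_all
    have "card (defect f) + card (defect g) \<in> N"
      using f(2)[OF fin(1)] g(2)[OF fin(2)] by (rule add)
    then show ?thesis
      unfolding card_defect_comp[OF f(1) fin] .
  qed
  then show "f \<circ> g \<in> Sym \<union> S N \<union> Inj_inf"
    unfolding mem using f g inj_compose by blast
qed

lemma nat_add_submonoid_MN:
  fixes M :: "('a \<Rightarrow> 'a) set"
  assumes "inj_submonoid M"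
  shows "nat_add_submonoid (MN M)"
  unfolding nat_add_submonoid_def
proof (intro conjI ballI)
  show "0 \<in> MN M"
    using assms unfolding MN_def inj_submonoid_def by (intro CollectI bexI[of _ id]) auto
  fix a b assume "a \<in> MN M" "b \<in> MN M"
  then obtain f g where fg: "f \<in> M" "g \<in> M" "finite (defect f)" "finite (defect g)"
    "card (defect f) = a" "card (defect g) = b"
    unfolding MN_def by auto
  have "inj f" "f \<circ> g \<in> M"
    using assms fg by (auto simp: inj_submonoid_def Inj_def)
  moreover have "finite (defect (f \<circ> g))"
    using fg finite_defect_comp[OF \<open>inj f\<close>] by blast
  moreover have "card (defect (f \<circ> g)) = a + b"
    unfolding card_defect_comp[OF \<open>inj f\<close> fg(3,4)] using fg by simp
  ultimately show "a + b \<in> MN M"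
    unfolding MN_def by blast
qed

lemma mem_if_defect_equinumerous:
  fixes M :: "('a \<Rightarrow> 'a) set"
  assumes M: "inj_submonoid M" "Sym \<subseteq> M"
    and f: "f \<in> M" and g: "inj g" and h: "bij_betw h (defect f) (defect g)"
  shows "g \<in> M"
proof -
  have "inj f"
    using M f by (auto simp: inj_submonoid_def Inj_def)
  then obtain \<sigma> where "bij \<sigma>" "g = \<sigma> \<circ> f"
    using defect_transfer g h by blast
  then show ?thesis
    using M f by (auto simp: inj_submonoid_def Sym_def)
qed

lemma submonoid_subset_classes:
  fixes M :: "('a \<Rightarrow> 'a) set"
  assumes "inj_submonoid M"
  shows "M \<subseteq> Sym \<union> S (MN M) \<union> Inj_inf"
proof
  fix f assume f: "f \<in> M"
  then have "inj f"
    using assms by (auto simp: inj_submonoid_def Inj_def)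
  moreover have "finite (defect f) \<longrightarrow> card (defect f) \<in> MN M"
    using f by (auto simp: MN_def)
  ultimately show "f \<in> Sym \<union> S (MN M) \<union> Inj_inf"
    using mem_Sym_S_iff[of "MN M" f] nat_add_submonoid_MN[OF assms]
    by (auto simp: nat_add_submonoid_def Inj_inf_def)
qed

lemma Sym_S_MN_subset:
  fixes M :: "('a \<Rightarrow> 'a) set"
  assumes "inj_submonoid M" "Sym \<subseteq> M"
  shows "Sym \<union> S (MN M) \<subseteq> M"
proof
  fix g :: "'a \<Rightarrow> 'a" assume "g \<in> Sym \<union> S (MN M)"
  then show "g \<in> M"
  proof
    assume "g \<in> S (MN M)"
    then have g: "inj g" "finite (defect g)" "card (defect g) \<in> MN M"
      unfolding S_def by auto
    then obtain f where "f \<in> M" "finite (defect f)" "card (defect f) = card (defect g)"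
      unfolding MN_def by auto
    then show ?thesis
      using mem_if_defect_equinumerous[OF assms] g finite_same_card_bij by metis
  qed (use assms in blast)
qed

lemma Inj_inf_subset:
  fixes M :: "('a::countable \<Rightarrow> 'a) set"
  assumes "inj_submonoid M" "Sym \<subseteq> M" and "f \<in> M" "infinite (defect f)"
  shows "Inj_inf \<subseteq> M"
proof
  fix g :: "'a \<Rightarrow> 'a" assume "g \<in> Inj_inf"
  then have "inj g" "infinite (defect g)"
    unfolding Inj_inf_def by auto
  then show "g \<in> M"
    using mem_if_defect_equinumerous[OF assms(1,2,3)] bij_betw_countable_infinite assms(4)
    by blast
qed

lemma submonoid_classification:
  fixes M :: "('a::countable \<Rightarrow> 'a) set"
  assumes "inj_submonoid M" "Sym \<subseteq> M"
  shows "M = Sym \<union> S (MN M) \<or> M = Sym \<union> S (MN M) \<union> Inj_inf"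
proof (cases "\<exists>f\<in>M. infinite (defect f)")
  case True
  then obtain f where "f \<in> M" "infinite (defect f)"
    by blast
  then have "Inj_inf \<subseteq> M"
    using Inj_inf_subset[OF assms] by blast
  then have "M = Sym \<union> S (MN M) \<union> Inj_inf"
    using submonoid_subset_classes[OF assms(1)] Sym_S_MN_subset[OF assms] by blast
  then show ?thesis ..
next
  case False
  then have "M \<subseteq> Sym \<union> S (MN M)"
    using submonoid_subset_classes[OF assms(1)] by (auto simp: Inj_inf_def)
  then show ?thesis
    using Sym_S_MN_subset[OF assms] by blast
qed

theorem mainTheorem5:
  assumes "infinite (UNIV :: 'a::countable set)"
  shows "(\<forall>N. nat_add_submonoid N \<longrightarrow>
            inj_submonoid (Sym \<union> S N :: ('a \<Rightarrow> 'a) set) \<and>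
            inj_submonoid (Sym \<union> S N \<union> Inj_inf :: ('a \<Rightarrow> 'a) set))
       \<and> (\<forall>M :: ('a \<Rightarrow> 'a) set. inj_submonoid M \<and> Sym \<subseteq> M \<longrightarrow>
            nat_add_submonoid (MN M) \<and>
            (M = Sym \<union> S (MN M) \<or> M = Sym \<union> S (MN M) \<union> Inj_inf))"
proof (intro conjI allI impI)
  fix N :: "nat set" assume "nat_add_submonoid N"
  then show "inj_submonoid (Sym \<union> S N :: ('a \<Rightarrow> 'a) set)"
    and "inj_submonoid (Sym \<union> S N \<union> Inj_inf :: ('a \<Rightarrow> 'a) set)"
    by (rule inj_submonoid_Sym_S, rule inj_submonoid_Sym_S_Inj_inf)
next
  fix M :: "('a \<Rightarrow> 'a) set" assume "inj_submonoid M \<and> Sym \<subseteq> M"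
  then show "nat_add_submonoid (MN M)"
    and "M = Sym \<union> S (MN M) \<or> M = Sym \<union> S (MN M) \<union> Inj_inf"
    by (simp_all add: nat_add_submonoid_MN submonoid_classification)
qed

end
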